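(* Let $\alpha, \lambda \in (0,1)$, let $k \ge 1$ be an integer, let $V_1,\dots,V_k$ be finite sets, and let $d$ be an integer with $2 \le d \le \min\{|V_1|,\dots,|V_k|\}$. Suppose that $\mathcal{H} \subseteq V_1 \times \dots \times V_k$ satisfies \[ |\mathcal{H}| \le (\alpha\lambda)^k \prod_{i=1}^k |V_i|. \] Then for all but at most \[ (d^k - 1)\,(2\alpha^\lambda)^d \prod_{i=1}^k \binom{|V_i|}{d} \] choices of $W_1 \in \binom{V_1}{d}, \dots, W_k \in \binom{V_k}{d}$, we have \[ |\mathcal{H} \cap (W_1 \times \dots \times W_k)| \le k\lambda d^k. \]
   Context: $\binom{V}{d}$ denotes the family of all $d$-element subsets of $V$. *)

theory Defs
  imports Complex_Main "HOL-Library.FuncSet"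
begin

definition dsubsets :: "'a set \<Rightarrow> nat \<Rightarrow> 'a set set" where
  "dsubsets V d = {W. W \<subseteq> V \<and> card W = d}"

end

theory Submission
  imports Defs
begin

text \<open>
Induction on the number k of coordinates, peeling off the last one. Call a vertex x of the last
part heavy if its fibre (the tuples of H ending in x, with x dropped) has more than
(\<alpha>\<lambda>)^(k-1) |V_1| ... |V_(k-1)| elements; by Markov's inequality at most \<alpha>\<lambda>|V_k| vertices
are heavy. A slice of a box W_1 \<times> ... \<times> W_k holds at most d^(k-1) points, so a box with more
than k\<lambda>d^k points of H either has W_k meeting the heavy vertices in more than \<lambda>d points, or
its first k-1 sides form a dense box for the fibre of some light x \<in> W_k.
A d-set meets a set of density \<alpha> in t > \<lambda>d points for at most
C(\<alpha>n, t) C(n-t, d-t) \<le> \<alpha>^t 2^d C(n, d) choices, which bounds the boxes of the first kind;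
those of the second kind are bounded by induction, each vertex lying in a fraction d/n of the
d-subsets of its part.
\<close>

lemma binomial_le_ratio_power_mult:
  fixes z n t :: nat
  assumes "z \<le> n" "0 < n"
  shows "real (z choose t) \<le> (real z / real n) ^ t * real (n choose t)"
proof (cases "t \<le> z")
  case False
  then show ?thesis by (simp add: binomial_eq_0)
next
  case True
  have "real (z choose t) = (\<Prod>i = 0..<t. real (z - i) / real (t - i))"
    using True by (rule binomial_altdef_of_nat)
  also have "\<dots> \<le> (\<Prod>i = 0..<t. real z / real n * (real (n - i) / real (t - i)))"
  proof (rule prod_mono)
    fix i assume "i \<in> {0..<t}"
    then have "i \<le> z" using True by simp
    then have "real (z - i) \<le> real z / real n * real (n - i)"
      using assms by (simp add: of_nat_diff field_simps mult_left_mono)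
    from divide_right_mono[OF this, of "real (t - i)"]
    show "0 \<le> real (z - i) / real (t - i) \<and>
        real (z - i) / real (t - i) \<le> real z / real n * (real (n - i) / real (t - i))"
      by simp
  qed
  also have "\<dots> = (\<Prod>i = 0..<t. real z / real n) * (\<Prod>i = 0..<t. real (n - i) / real (t - i))"
    by (rule prod.distrib)
  also have "\<dots> = (real z / real n) ^ t * real (n choose t)"
    using True assms by (simp add: binomial_altdef_of_nat)
  finally show ?thesis .
qed

lemma finite_dsubsets: "finite V \<Longrightarrow> finite (dsubsets V d)"
  by (rule finite_subset[of _ "Pow V"]) (auto simp: dsubsets_def)

lemma card_dsubsets: "finite V \<Longrightarrow> card (dsubsets V d) = card V choose d"
  unfolding dsubsets_def by (rule n_subsets)

lemma card_dsubsets_supersets_le: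
  assumes "finite V" "T \<subseteq> V" "card T \<le> d"
  shows "card {S \<in> dsubsets V d. T \<subseteq> S} \<le> (card V - card T) choose (d - card T)"
proof -
  have "finite T" using assms finite_subset by blast
  have "card {S \<in> dsubsets V d. T \<subseteq> S} \<le> card (dsubsets (V - T) (d - card T))"
  proof (rule card_inj_on_le[where f = "\<lambda>S. S - T"])
    show "inj_on (\<lambda>S. S - T) {S \<in> dsubsets V d. T \<subseteq> S}"
      by (rule inj_onI) blast
    show "(\<lambda>S. S - T) ` {S \<in> dsubsets V d. T \<subseteq> S} \<subseteq> dsubsets (V - T) (d - card T)"
      using \<open>finite T\<close> by (auto simp: dsubsets_def card_Diff_subset)
    show "finite (dsubsets (V - T) (d - card T))"
      using assms by (simp add: finite_dsubsets)
  qed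
  also have "\<dots> = (card V - card T) choose (d - card T)"
    using assms \<open>finite T\<close> by (simp add: card_dsubsets card_Diff_subset)
  finally show ?thesis .
qed

lemma card_dsubsets_meeting_le:
  assumes "finite V" "Z \<subseteq> V" "t \<le> d"
  shows "card {S \<in> dsubsets V d. t \<le> card (S \<inter> Z)}
    \<le> (card Z choose t) * ((card V - t) choose (d - t))"
proof -
  have "finite Z" using assms finite_subset by blast
  have "{S \<in> dsubsets V d. t \<le> card (S \<inter> Z)} \<subseteq> (\<Union>T\<in>dsubsets Z t. {S \<in> dsubsets V d. T \<subseteq> S})"
  proof
    fix S assume S: "S \<in> {S \<in> dsubsets V d. t \<le> card (S \<inter> Z)}"
    then have "t \<le> card (S \<inter> Z)" by simp
    then obtain T where "T \<subseteq> S \<inter> Z" "card T = t"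
      by (rule obtain_subset_with_card_n)
    with S show "S \<in> (\<Union>T\<in>dsubsets Z t. {S \<in> dsubsets V d. T \<subseteq> S})"
      by (auto simp: dsubsets_def)
  qed
  then have "card {S \<in> dsubsets V d. t \<le> card (S \<inter> Z)}
      \<le> card (\<Union>T\<in>dsubsets Z t. {S \<in> dsubsets V d. T \<subseteq> S})"
    by (intro card_mono finite_subset[OF _ finite_dsubsets[OF \<open>finite V\<close>, of d]]) auto
  also have "\<dots> \<le> (\<Sum>T\<in>dsubsets Z t. card {S \<in> dsubsets V d. T \<subseteq> S})"
    using \<open>finite Z\<close> by (intro card_UN_le finite_dsubsets)
  also have "\<dots> \<le> (\<Sum>T\<in>dsubsets Z t. (card V - t) choose (d - t))"
  proof (rule sum_mono)
    fix T assume "T \<in> dsubsets Z t"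
    then have "T \<subseteq> V" "card T = t" using assms by (auto simp: dsubsets_def)
    then show "card {S \<in> dsubsets V d. T \<subseteq> S} \<le> (card V - t) choose (d - t)"
      using card_dsubsets_supersets_le[OF \<open>finite V\<close>] \<open>t \<le> d\<close> by blast
  qed
  also have "\<dots> = (card Z choose t) * ((card V - t) choose (d - t))"
    using \<open>finite Z\<close> by (simp add: card_dsubsets)
  finally show ?thesis .
qed

lemma card_dsubsets_dense_meeting_le:
  fixes alpha lam :: real
  assumes "finite V" "Z \<subseteq> V" "1 \<le> d" "d \<le> card V"
    and "0 < alpha" "alpha \<le> 1" "0 < lam" "lam < 1"
    and "real (card Z) \<le> alpha * real (card V)"
  shows "real (card {S \<in> dsubsets V d. lam * real d < real (card (S \<inter> Z))})
    \<le> (2 * alpha powr lam) ^ d * real (card V choose d)"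
proof -
  define n where "n = card V"
  define t where "t = nat \<lfloor>lam * real d\<rfloor> + 1"
  have "0 \<le> \<lfloor>lam * real d\<rfloor>" using assms by simp
  moreover have "lam * real d < real d" using assms by simp
  ultimately have "lam * real d < real t" "t \<le> d" and
    dense_iff: "\<And>j. lam * real d < real j \<longleftrightarrow> t \<le> j"
    unfolding t_def by linarith+
  have "0 < n" "card Z \<le> n" using assms card_mono by (auto simp: n_def)
  have "real (card {S \<in> dsubsets V d. lam * real d < real (card (S \<inter> Z))})
      \<le> real (card Z choose t) * real ((n - t) choose (d - t))"
    using card_dsubsets_meeting_le[OF assms(1,2) \<open>t \<le> d\<close>]
    unfolding dense_iff n_def of_nat_mult[symmetric] of_nat_le_iff .
  also have "\<dots> \<le> (real (card Z) / real n) ^ t * real (n choose t) * real ((n - t) choose (d - t))"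
    using binomial_le_ratio_power_mult[OF \<open>card Z \<le> n\<close> \<open>0 < n\<close>] by (simp add: mult_right_mono)
  also have "\<dots> = (real (card Z) / real n) ^ t * real (d choose t) * real (n choose d)"
  proof -
    have "real (n choose t) * real ((n - t) choose (d - t)) = real (d choose t) * real (n choose d)"
      using choose_mult[OF \<open>t \<le> d\<close>, of n] assms(4) unfolding n_def
      by (metis mult.commute of_nat_mult)
    then show ?thesis by (simp add: mult.assoc)
  qed
  also have "\<dots> \<le> alpha ^ t * 2 ^ d * real (n choose d)"
  proof -
    have "real (card Z) / real n \<le> alpha"
      using assms \<open>0 < n\<close> by (simp add: n_def divide_le_eq mult.commute)
    then have "(real (card Z) / real n) ^ t \<le> alpha ^ t"
      by (intro power_mono) auto
    moreover have "real (d choose t) \<le> 2 ^ d"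
      by (metis binomial_le_pow2 of_nat_le_iff of_nat_numeral of_nat_power)
    ultimately show ?thesis
      using assms by (intro mult_right_mono mult_mono) auto
  qed
  also have "\<dots> \<le> alpha powr (lam * real d) * 2 ^ d * real (n choose d)"
  proof -
    have "alpha ^ t = alpha powr real t"
      using assms by (simp add: powr_realpow)
    also have "\<dots> \<le> alpha powr (lam * real d)"
      using assms \<open>lam * real d < real t\<close> by (intro powr_mono') auto
    finally show ?thesis by (intro mult_right_mono) auto
  qed
  also have "\<dots> = (2 * alpha powr lam) ^ d * real (card V choose d)"
  proof -
    have "(alpha powr lam) ^ d = alpha powr (lam * real d)"
      using assms by (simp add: powr_realpow[symmetric] powr_powr)
    then show ?thesis by (simp add: n_def power_mult_distrib)
  qed
  finally show ?thesis .
qed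

lemma sum_card_dsubsets_containing:
  assumes "finite V"
  shows "(\<Sum>x\<in>V. card {S \<in> dsubsets V d. x \<in> S}) = d * (card V choose d)"
proof -
  have "finite (dsubsets V d)"
    using assms by (rule finite_dsubsets)
  have "(\<Sum>x\<in>V. card {S \<in> dsubsets V d. x \<in> S})
      = (\<Sum>x\<in>V. \<Sum>S\<in>dsubsets V d. if x \<in> S then 1 else 0)"
    using \<open>finite (dsubsets V d)\<close> by (simp add: sum.If_cases Int_def)
  also have "\<dots> = (\<Sum>S\<in>dsubsets V d. \<Sum>x\<in>V. if x \<in> S then 1 else 0)"
    by (rule sum.swap)
  also have "\<dots> = (\<Sum>S\<in>dsubsets V d. d)"
  proof (rule sum.cong)
    fix S assume "S \<in> dsubsets V d"
    then have "V \<inter> {x. x \<in> S} = S" "card S = d"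
      by (auto simp: dsubsets_def)
    with assms show "(\<Sum>x\<in>V. if x \<in> S then 1 else 0) = d"
      by (simp add: sum.If_cases)
  qed simp
  finally show ?thesis
    using assms by (simp add: card_dsubsets)
qed

lemma sum_card_dsubsets_containing_mult_le:
  fixes f :: "'a \<Rightarrow> real"
  assumes "finite V" "X \<subseteq> V" "0 \<le> B" "\<And>x. x \<in> X \<Longrightarrow> f x \<le> B"
  shows "(\<Sum>x\<in>X. real (card {S \<in> dsubsets V d. x \<in> S}) * f x) \<le> real d * real (card V choose d) * B"
proof -
  have "(\<Sum>x\<in>X. real (card {S \<in> dsubsets V d. x \<in> S}) * f x)
      \<le> (\<Sum>x\<in>X. real (card {S \<in> dsubsets V d. x \<in> S}) * B)"
    using assms(4) by (intro sum_mono mult_left_mono) auto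
  also have "\<dots> \<le> (\<Sum>x\<in>V. real (card {S \<in> dsubsets V d. x \<in> S}) * B)"
    using assms(1-3) by (intro sum_mono2) auto
  also have "\<dots> = real d * real (card V choose d) * B"
    using sum_card_dsubsets_containing[OF assms(1), of d]
    by (simp flip: sum_distrib_right of_nat_sum)
  finally show ?thesis .
qed

definition fiber :: "nat \<Rightarrow> (nat \<Rightarrow> 'a) set \<Rightarrow> 'a \<Rightarrow> (nat \<Rightarrow> 'a) set" where
  "fiber m H x = (\<lambda>f. restrict f {..<m}) ` {f \<in> H. f m = x}"

definition dense_boxes ::
    "nat \<Rightarrow> (nat \<Rightarrow> 'a set) \<Rightarrow> nat \<Rightarrow> real \<Rightarrow> (nat \<Rightarrow> 'a) set \<Rightarrow> (nat \<Rightarrow> 'a set) set" where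
  "dense_boxes k V d lam H = {W \<in> (\<Pi>\<^sub>E i\<in>{..<k}. dsubsets (V i) d).
      real (card (H \<inter> (\<Pi>\<^sub>E i\<in>{..<k}. W i))) > real k * lam * real d ^ k}"

lemma restrict_lessThan_upd:
  "W \<in> Pi\<^sub>E {..<Suc m} D \<Longrightarrow> (restrict W {..<m})(m := W m) = W"
  by (simp add: lessThan_Suc)

lemma inj_on_restrict_lessThan:
  "inj_on (\<lambda>f. restrict f {..<m}) {f \<in> Pi\<^sub>E {..<Suc m} W. f m = x}"
proof (rule inj_onI)
  fix f g assume f: "f \<in> {f \<in> Pi\<^sub>E {..<Suc m} W. f m = x}" and g: "g \<in> {f \<in> Pi\<^sub>E {..<Suc m} W. f m = x}"
    and eq: "restrict f {..<m} = restrict g {..<m}"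
  show "f = g"
  proof (rule PiE_ext[of f "{..<Suc m}" W g])
    fix i assume "i \<in> {..<Suc m}"
    then show "f i = g i"
      using f g fun_cong[OF eq, of i] by (cases "i = m") auto
  qed (use f g in auto)
qed

lemma card_PiE_Suc_filter_le:
  assumes "finite P" "finite Q"
  shows "card {W \<in> Pi\<^sub>E {..<Suc m} D. W m \<in> P \<and> restrict W {..<m} \<in> Q} \<le> card P * card Q"
proof -
  have "{W \<in> Pi\<^sub>E {..<Suc m} D. W m \<in> P \<and> restrict W {..<m} \<in> Q}
      \<subseteq> (\<lambda>(y, g). g(m := y)) ` (P \<times> Q)"
  proof
    fix W assume W: "W \<in> {W \<in> Pi\<^sub>E {..<Suc m} D. W m \<in> P \<and> restrict W {..<m} \<in> Q}"
    then have "W \<in> Pi\<^sub>E {..<Suc m} D" by simp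
    then have "W = (\<lambda>(y, g). g(m := y)) (W m, restrict W {..<m})"
      unfolding prod.case by (rule restrict_lessThan_upd[symmetric])
    with W show "W \<in> (\<lambda>(y, g). g(m := y)) ` (P \<times> Q)" by blast
  qed
  then have "card {W \<in> Pi\<^sub>E {..<Suc m} D. W m \<in> P \<and> restrict W {..<m} \<in> Q}
      \<le> card ((\<lambda>(y, g). g(m := y)) ` (P \<times> Q))"
    using assms by (intro card_mono) auto
  also have "\<dots> \<le> card (P \<times> Q)"
    using assms by (intro card_image_le) auto
  finally show ?thesis by (simp add: card_cartesian_product)
qed

lemma finite_fiber: "finite H \<Longrightarrow> finite (fiber m H x)"
  by (simp add: fiber_def)

lemma fiber_subset_PiE:
  assumes "H \<subseteq> Pi\<^sub>E {..<Suc m} V"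
  shows "fiber m H x \<subseteq> Pi\<^sub>E {..<m} V"
proof
  fix g assume "g \<in> fiber m H x"
  then obtain f where "f \<in> H" "g = restrict f {..<m}"
    unfolding fiber_def by blast
  moreover from assms \<open>f \<in> H\<close> have "\<forall>i<Suc m. f i \<in> V i"
    by (auto simp: PiE_iff)
  ultimately show "g \<in> Pi\<^sub>E {..<m} V"
    by (simp add: restrict_PiE_iff)
qed

lemma sum_card_fiber_le:
  assumes "finite X" "finite H"
  shows "(\<Sum>x\<in>X. card (fiber m H x)) \<le> card H"
proof -
  have "(\<Sum>x\<in>X. card (fiber m H x)) \<le> (\<Sum>x\<in>X. card {f \<in> H. f m = x})"
    unfolding fiber_def using assms by (intro sum_mono card_image_le) auto
  also have "\<dots> = card (\<Union>x\<in>X. {f \<in> H. f m = x})"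
    using assms by (intro card_UN_disjoint[symmetric]) auto
  also have "\<dots> \<le> card H"
    using assms by (intro card_mono) auto
  finally show ?thesis .
qed

lemma card_heavy_fibers_le:
  assumes "finite X" "finite H"
  shows "real (card {x \<in> X. c < real (card (fiber m H x))}) * c \<le> real (card H)"
proof -
  let ?Z = "{x \<in> X. c < real (card (fiber m H x))}"
  have "real (card ?Z) * c = (\<Sum>x\<in>?Z. c)" by simp
  also have "\<dots> \<le> (\<Sum>x\<in>?Z. real (card (fiber m H x)))"
    by (intro sum_mono) auto
  also have "\<dots> \<le> real (card H)"
    using sum_card_fiber_le[of ?Z H m] assms by (simp flip: of_nat_sum)
  finally show ?thesis .
qed

lemma card_Int_PiE_Suc_le_sum_fiber:
  assumes "finite H" "finite (W m)"
  shows "card (H \<inter> Pi\<^sub>E {..<Suc m} W) \<le> (\<Sum>x\<in>W m. card (fiber m H x \<inter> Pi\<^sub>E {..<m} W))"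
proof -
  let ?slice = "\<lambda>x. {f \<in> H \<inter> Pi\<^sub>E {..<Suc m} W. f m = x}"
  have "card (H \<inter> Pi\<^sub>E {..<Suc m} W) = card (\<Union>x\<in>W m. ?slice x)"
    by (intro arg_cong[where f = card]) auto
  also have "\<dots> \<le> (\<Sum>x\<in>W m. card (?slice x))"
    using assms by (intro card_UN_le)
  also have "\<dots> \<le> (\<Sum>x\<in>W m. card (fiber m H x \<inter> Pi\<^sub>E {..<m} W))"
  proof (intro sum_mono card_inj_on_le[where f = "\<lambda>f. restrict f {..<m}"])
    fix x
    show "inj_on (\<lambda>f. restrict f {..<m}) (?slice x)"
      by (rule inj_on_subset[OF inj_on_restrict_lessThan[of m W x]]) auto
    show "(\<lambda>f. restrict f {..<m}) ` ?slice x \<subseteq> fiber m H x \<inter> Pi\<^sub>E {..<m} W"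
    proof
      fix g assume "g \<in> (\<lambda>f. restrict f {..<m}) ` ?slice x"
      then obtain f where f: "f \<in> ?slice x" and g: "g = restrict f {..<m}"
        by blast
      then have "g \<in> fiber m H x"
        unfolding fiber_def by blast
      moreover from f have "\<forall>i\<in>{..<m}. f i \<in> W i"
        by (auto simp: PiE_iff)
      then have "g \<in> Pi\<^sub>E {..<m} W"
        unfolding g by (simp add: restrict_PiE_iff)
      ultimately show "g \<in> fiber m H x \<inter> Pi\<^sub>E {..<m} W"
        by blast
    qed
    show "finite (fiber m H x \<inter> Pi\<^sub>E {..<m} W)"
      using assms by (simp add: finite_fiber)
  qed
  finally show ?thesis .
qed

lemma card_Int_PiE_dsubsets_le:
  assumes "W \<in> Pi\<^sub>E {..<k} (\<lambda>i. dsubsets (V i) d)" "\<And>i. i < k \<Longrightarrow> finite (V i)"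
  shows "card (A \<inter> Pi\<^sub>E {..<k} W) \<le> d ^ k"
proof -
  have W: "W i \<subseteq> V i" "card (W i) = d" if "i < k" for i
    using assms(1) that by (auto simp: PiE_iff dsubsets_def)
  have "finite (W i)" if "i < k" for i
    using W(1)[OF that] assms(2)[OF that] by (rule finite_subset)
  then have "finite (Pi\<^sub>E {..<k} W)"
    by (intro finite_PiE) auto
  then have "card (A \<inter> Pi\<^sub>E {..<k} W) \<le> card (Pi\<^sub>E {..<k} W)"
    by (intro card_mono) auto
  also have "\<dots> = (\<Prod>i<k. card (W i))"
    by (rule card_PiE) simp
  also have "\<dots> = d ^ k"
    using W by simp
  finally show ?thesis .
qed

lemma dense_boxes_Suc_cases:
  fixes lam :: real
  assumes W: "W \<in> dense_boxes (Suc m) V d lam H"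
    and "finite H" "\<And>i. i < Suc m \<Longrightarrow> finite (V i)" "0 \<le> lam"
  obtains "lam * real d < real (card (W m \<inter> Z))"
    | x where "x \<in> W m - Z" "restrict W {..<m} \<in> dense_boxes m V d lam (fiber m H x)"
proof (rule ccontr)
  assume "\<not> thesis"
  then have thin: "real (card (W m \<inter> Z)) \<le> lam * real d"
    and sparse: "\<And>x. x \<in> W m - Z \<Longrightarrow> restrict W {..<m} \<notin> dense_boxes m V d lam (fiber m H x)"
    using that by (meson DiffD1 DiffD2 not_less)+
  from W have WP: "W \<in> Pi\<^sub>E {..<Suc m} (\<lambda>i. dsubsets (V i) d)"
    and dense: "real (Suc m) * lam * real d ^ Suc m < real (card (H \<inter> Pi\<^sub>E {..<Suc m} W))"
    by (auto simp: dense_boxes_def)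
  have Wm: "W m \<subseteq> V m" "card (W m) = d"
    using WP by (auto simp: PiE_iff dsubsets_def)
  then have "finite (W m)"
    using assms(3) by (auto intro: finite_subset)
  have restr: "restrict W {..<m} \<in> Pi\<^sub>E {..<m} (\<lambda>i. dsubsets (V i) d)"
    using WP by (auto simp: restrict_PiE_iff PiE_iff)
  have box: "Pi\<^sub>E {..<m} (restrict W {..<m}) = Pi\<^sub>E {..<m} W"
    by (rule PiE_cong) simp
  have light: "real (card (fiber m H x \<inter> Pi\<^sub>E {..<m} W)) \<le> real m * lam * real d ^ m"
    if "x \<in> W m - Z" for x
    using sparse[OF that] restr box by (simp add: dense_boxes_def not_less)
  have "real (card (H \<inter> Pi\<^sub>E {..<Suc m} W))
      \<le> (\<Sum>x\<in>W m. real (card (fiber m H x \<inter> Pi\<^sub>E {..<m} W)))"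
    using card_Int_PiE_Suc_le_sum_fiber[of H W m, OF \<open>finite H\<close> \<open>finite (W m)\<close>]
    by (simp flip: of_nat_sum)
  also have "\<dots> \<le> (\<Sum>x\<in>W m. if x \<in> Z then real d ^ m else real m * lam * real d ^ m)"
  proof (rule sum_mono)
    fix x assume "x \<in> W m"
    have "card (fiber m H x \<inter> Pi\<^sub>E {..<m} W) \<le> d ^ m"
      using card_Int_PiE_dsubsets_le[OF restr, of "fiber m H x"] assms(3) by (simp add: box)
    with light[of x] \<open>x \<in> W m\<close>
    show "real (card (fiber m H x \<inter> Pi\<^sub>E {..<m} W))
        \<le> (if x \<in> Z then real d ^ m else real m * lam * real d ^ m)"
      by (auto simp flip: of_nat_power)
  qed
  also have "\<dots> = real (card (W m \<inter> Z)) * real d ^ m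
      + real (card (W m - Z)) * (real m * lam * real d ^ m)"
    using \<open>finite (W m)\<close> by (simp add: sum.If_cases Int_def Diff_eq)
  also have "\<dots> \<le> lam * real d * real d ^ m + real d * (real m * lam * real d ^ m)"
  proof (intro add_mono mult_right_mono)
    show "real (card (W m - Z)) \<le> real d"
      using Wm \<open>finite (W m)\<close> by (metis Diff_subset card_mono of_nat_mono)
  qed (use thin \<open>0 \<le> lam\<close> in auto)
  also have "\<dots> = real (Suc m) * lam * real d ^ Suc m"
    by (simp add: algebra_simps)
  finally show False
    using dense by simp
qed

lemma card_dense_boxes_Suc_le_sum:
  fixes lam :: real
  assumes "finite H" and finV: "\<And>i. i < Suc m \<Longrightarrow> finite (V i)" and "0 \<le> lam"
  shows "card (dense_boxes (Suc m) V d lam H)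
    \<le> card {S \<in> dsubsets (V m) d. lam * real d < real (card (S \<inter> Z))} * (\<Prod>i<m. card (V i) choose d)
      + (\<Sum>x\<in>V m - Z. card {S \<in> dsubsets (V m) d. x \<in> S} * card (dense_boxes m V d lam (fiber m H x)))"
proof -
  define D where "D i = dsubsets (V i) d" for i
  define A' where "A' = {S \<in> D m. lam * real d < real (card (S \<inter> Z))}"
  define A where "A = {W \<in> Pi\<^sub>E {..<Suc m} D. W m \<in> A' \<and> restrict W {..<m} \<in> Pi\<^sub>E {..<m} D}"
  define C where "C x = {W \<in> Pi\<^sub>E {..<Suc m} D.
    W m \<in> {S \<in> D m. x \<in> S} \<and> restrict W {..<m} \<in> dense_boxes m V d lam (fiber m H x)}" for x
  have finD: "finite (D i)" if "i < Suc m" for i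
    unfolding D_def using finV[OF that] by (rule finite_dsubsets)
  then have "finite (Pi\<^sub>E {..<Suc m} D)" "finite (Pi\<^sub>E {..<m} D)"
    by (auto intro: finite_PiE)
  have fin_dense: "finite (dense_boxes m V d lam H')" for H'
    using \<open>finite (Pi\<^sub>E {..<m} D)\<close> by (rule finite_subset[rotated]) (auto simp: dense_boxes_def D_def)
  have "dense_boxes (Suc m) V d lam H \<subseteq> A \<union> (\<Union>x\<in>V m - Z. C x)"
  proof
    fix W assume W: "W \<in> dense_boxes (Suc m) V d lam H"
    then have WP: "W \<in> Pi\<^sub>E {..<Suc m} D" and "restrict W {..<m} \<in> Pi\<^sub>E {..<m} D"
      by (auto simp: dense_boxes_def D_def restrict_PiE_iff PiE_iff)
    show "W \<in> A \<union> (\<Union>x\<in>V m - Z. C x)"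
    proof (rule dense_boxes_Suc_cases[OF W \<open>finite H\<close> finV \<open>0 \<le> lam\<close>, where Z = Z])
      assume "lam * real d < real (card (W m \<inter> Z))"
      moreover have "W m \<in> D m"
        using WP by (auto simp: PiE_iff)
      ultimately have "W \<in> A"
        using WP \<open>restrict W {..<m} \<in> Pi\<^sub>E {..<m} D\<close> by (simp add: A_def A'_def)
      then show ?thesis ..
    next
      fix x assume "x \<in> W m - Z" "restrict W {..<m} \<in> dense_boxes m V d lam (fiber m H x)"
      moreover have "W m \<subseteq> V m"
        using PiE_mem[OF WP, of m] by (simp add: D_def dsubsets_def)
      ultimately have "x \<in> V m - Z" "W \<in> C x"
        using WP by (auto simp: C_def)
      then show ?thesis by blast
    qed
  qed
  then have "card (dense_boxes (Suc m) V d lam H) \<le> card (A \<union> (\<Union>x\<in>V m - Z. C x))"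
    by (intro card_mono finite_subset[OF _ \<open>finite (Pi\<^sub>E {..<Suc m} D)\<close>])
      (auto simp: A_def C_def)
  also have "\<dots> \<le> card A + card (\<Union>x\<in>V m - Z. C x)"
    by (rule card_Un_le)
  also have "\<dots> \<le> card A + (\<Sum>x\<in>V m - Z. card (C x))"
    using finV[of m] by (intro add_left_mono card_UN_le) simp
  also have "\<dots> \<le> card A' * card (Pi\<^sub>E {..<m} D)
      + (\<Sum>x\<in>V m - Z. card {S \<in> D m. x \<in> S} * card (dense_boxes m V d lam (fiber m H x)))"
    unfolding A_def C_def using finD \<open>finite (Pi\<^sub>E {..<m} D)\<close> fin_dense
    by (intro add_mono sum_mono card_PiE_Suc_filter_le) (auto simp: A'_def)
  also have "card (Pi\<^sub>E {..<m} D) = (\<Prod>i<m. card (V i) choose d)"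
    using finV by (simp add: card_PiE card_dsubsets D_def)
  finally show ?thesis
    unfolding A'_def D_def .
qed

lemma card_dense_boxes_Suc_le:
  fixes lam B :: real
  assumes "finite H" "\<And>i. i < Suc m \<Longrightarrow> finite (V i)" "0 \<le> lam" "0 \<le> B"
    and "\<And>x. x \<in> V m - Z \<Longrightarrow> real (card (dense_boxes m V d lam (fiber m H x))) \<le> B"
  shows "real (card (dense_boxes (Suc m) V d lam H))
    \<le> real (card {S \<in> dsubsets (V m) d. lam * real d < real (card (S \<inter> Z))})
        * (\<Prod>i<m. real (card (V i) choose d))
      + real d * real (card (V m) choose d) * B"
proof -
  have "real (card (dense_boxes (Suc m) V d lam H))
    \<le> real (card {S \<in> dsubsets (V m) d. lam * real d < real (card (S \<inter> Z))})
        * (\<Prod>i<m. real (card (V i) choose d))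
      + (\<Sum>x\<in>V m - Z. real (card {S \<in> dsubsets (V m) d. x \<in> S})
          * real (card (dense_boxes m V d lam (fiber m H x))))"
    using card_dense_boxes_Suc_le_sum[OF assms(1-3), where d = d and Z = Z]
    by (simp flip: of_nat_mult of_nat_sum of_nat_add of_nat_prod)
  also have "\<dots> \<le> real (card {S \<in> dsubsets (V m) d. lam * real d < real (card (S \<inter> Z))})
        * (\<Prod>i<m. real (card (V i) choose d))
      + real d * real (card (V m) choose d) * B"
    using assms(2)[of m] assms(4,5) by (intro add_left_mono sum_card_dsubsets_containing_mult_le) auto
  finally show ?thesis .
qed

text \<open>The bound fails for k = 0 (a single tuple already forms a dense empty box), so the
induction starts at k = 1, where the heavy vertices are simply the projection of H.\<close>

lemma card_dense_boxes_one_le: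
  fixes alpha lam :: real
  assumes "0 < alpha" "alpha \<le> 1" "0 < lam" "lam < 1" "2 \<le> d"
    and "finite (V 0)" "d \<le> card (V 0)"
    and "H \<subseteq> Pi\<^sub>E {..<Suc 0} V" "real (card H) \<le> alpha * lam * real (card (V 0))"
  shows "real (card (dense_boxes (Suc 0) V d lam H))
    \<le> (real d - 1) * (2 * alpha powr lam) ^ d * real (card (V 0) choose d)"
proof -
  define Z where "Z = (\<lambda>f. f 0) ` H"
  have "finite H"
    using assms(8) by (rule finite_subset) (use assms(6) in \<open>auto intro: finite_PiE\<close>)
  have "Z \<subseteq> V 0"
    using assms(8) by (auto simp: Z_def PiE_iff)
  have "real (card Z) \<le> real (card H)"
    unfolding Z_def using \<open>finite H\<close> by (simp add: card_image_le)
  also have "\<dots> \<le> alpha * lam * real (card (V 0))"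
    by (rule assms(9))
  also have "\<dots> \<le> alpha * real (card (V 0))"
    using assms(1,4) by (intro mult_right_mono) auto
  finally have "real (card Z) \<le> alpha * real (card (V 0))" .
  have "fiber 0 H x = {}" if "x \<notin> Z" for x
    using that by (auto simp: fiber_def Z_def)
  then have "real (card (dense_boxes 0 V d lam (fiber 0 H x))) \<le> 0" if "x \<in> V 0 - Z" for x
    using that by (simp add: dense_boxes_def)
  from card_dense_boxes_Suc_le[OF \<open>finite H\<close> _ _ _ this]
  have "real (card (dense_boxes (Suc 0) V d lam H))
      \<le> real (card {S \<in> dsubsets (V 0) d. lam * real d < real (card (S \<inter> Z))})"
    using assms(3,6) by simp
  also have "\<dots> \<le> (2 * alpha powr lam) ^ d * real (card (V 0) choose d)"
    using assms \<open>Z \<subseteq> V 0\<close> \<open>real (card Z) \<le> alpha * real (card (V 0))\<close>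
    by (intro card_dsubsets_dense_meeting_le) auto
  also have "\<dots> \<le> (real d - 1) * ((2 * alpha powr lam) ^ d * real (card (V 0) choose d))"
  proof -
    have "1 \<le> real d - 1"
      using assms(5) by simp
    from mult_right_mono[OF this, of "(2 * alpha powr lam) ^ d * real (card (V 0) choose d)"]
    show ?thesis by simp
  qed
  finally show ?thesis by (simp add: mult.assoc)
qed

lemma card_dense_boxes_bound_Suc:
  fixes alpha lam :: real and d :: nat
  defines "K \<equiv> (2 * alpha powr lam) ^ d"
  assumes "0 < alpha" "alpha \<le> 1" "0 < lam" "lam < 1" "2 \<le> d"
    and finV: "\<And>i. i < Suc m \<Longrightarrow> finite (V i)" and dV: "\<And>i. i < Suc m \<Longrightarrow> d \<le> card (V i)"
    and IH: "\<And>H'. H' \<subseteq> Pi\<^sub>E {..<m} V \<Longrightarrow>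
      real (card H') \<le> (alpha * lam) ^ m * (\<Prod>i<m. real (card (V i))) \<Longrightarrow>
      real (card (dense_boxes m V d lam H')) \<le> (real d ^ m - 1) * K * (\<Prod>i<m. real (card (V i) choose d))"
    and H: "H \<subseteq> Pi\<^sub>E {..<Suc m} V"
      "real (card H) \<le> (alpha * lam) ^ Suc m * (\<Prod>i<Suc m. real (card (V i)))"
  shows "real (card (dense_boxes (Suc m) V d lam H))
    \<le> (real d ^ Suc m - 1) * K * (\<Prod>i<Suc m. real (card (V i) choose d))"
proof -
  define P where "P = (\<Prod>i<m. real (card (V i) choose d))"
  define c where "c = (alpha * lam) ^ m * (\<Prod>i<m. real (card (V i)))"
  define Z where "Z = {x \<in> V m. c < real (card (fiber m H x))}"
  have "0 \<le> K" "0 \<le> P"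
    by (auto simp: K_def P_def prod_nonneg)
  have "0 < card (V i)" if "i < m" for i
    using dV[of i] assms(6) that by simp
  then have "0 < c"
    unfolding c_def using assms(2,4) by (intro mult_pos_pos zero_less_power prod_pos) auto
  have "finite H"
    using H(1) by (rule finite_subset) (use finV in \<open>auto intro: finite_PiE\<close>)
  have "Z \<subseteq> V m"
    by (auto simp: Z_def)
  have "real (card Z) * c \<le> real (card H)"
    unfolding Z_def using finV[of m] \<open>finite H\<close> by (intro card_heavy_fibers_le) auto
  also have "\<dots> \<le> alpha * lam * real (card (V m)) * c"
    using H(2) by (simp add: c_def algebra_simps)
  finally have "real (card Z) \<le> alpha * lam * real (card (V m))"
    using \<open>0 < c\<close> by simp
  also have "\<dots> \<le> alpha * real (card (V m))"
    using assms(2,5) by (intro mult_right_mono) auto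
  finally have "real (card Z) \<le> alpha * real (card (V m))" .
  have light: "real (card (dense_boxes m V d lam (fiber m H x))) \<le> (real d ^ m - 1) * K * P"
    if "x \<in> V m - Z" for x
    using that IH[OF fiber_subset_PiE[OF H(1)]] by (auto simp: Z_def c_def P_def not_less)
  have "(real d ^ m - 1) * K * P \<ge> 0"
    using \<open>0 \<le> K\<close> \<open>0 \<le> P\<close> assms(6) by (simp add: one_le_power)
  from card_dense_boxes_Suc_le[OF \<open>finite H\<close> finV _ this light]
  have "real (card (dense_boxes (Suc m) V d lam H))
      \<le> real (card {S \<in> dsubsets (V m) d. lam * real d < real (card (S \<inter> Z))}) * P
        + real d * real (card (V m) choose d) * ((real d ^ m - 1) * K * P)"
    using assms(4) by (simp add: P_def)
  also have "\<dots> \<le> K * real (card (V m) choose d) * P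
      + real d * real (card (V m) choose d) * ((real d ^ m - 1) * K * P)"
    using card_dsubsets_dense_meeting_le[OF finV[of m] \<open>Z \<subseteq> V m\<close> _ dV[of m]]
      assms(2-6) \<open>real (card Z) \<le> alpha * real (card (V m))\<close> \<open>0 \<le> P\<close>
    by (intro add_mono mult_right_mono) (auto simp: K_def)
  also have "\<dots> = (real d ^ Suc m - (real d - 1)) * K * P * real (card (V m) choose d)"
    by (simp add: algebra_simps)
  also have "\<dots> \<le> (real d ^ Suc m - 1) * K * P * real (card (V m) choose d)"
    using assms(6) \<open>0 \<le> K\<close> \<open>0 \<le> P\<close> by (intro mult_right_mono) auto
  finally show ?thesis
    by (simp add: P_def mult.assoc)
qed

lemma card_dense_boxes_le:
  fixes alpha lam :: real and d m :: nat
  assumes "0 < alpha" "alpha \<le> 1" "0 < lam" "lam < 1" "2 \<le> d"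
    and "\<And>i. i < Suc m \<Longrightarrow> finite (V i)" "\<And>i. i < Suc m \<Longrightarrow> d \<le> card (V i)"
    and "H \<subseteq> Pi\<^sub>E {..<Suc m} V"
      "real (card H) \<le> (alpha * lam) ^ Suc m * (\<Prod>i<Suc m. real (card (V i)))"
  shows "real (card (dense_boxes (Suc m) V d lam H))
    \<le> (real d ^ Suc m - 1) * (2 * alpha powr lam) ^ d * (\<Prod>i<Suc m. real (card (V i) choose d))"
  using assms(6-9)
proof (induction m arbitrary: H)
  case 0
  then show ?case
    using card_dense_boxes_one_le[OF assms(1-5)] by simp
next
  case (Suc m)
  show ?case
    by (rule card_dense_boxes_bound_Suc[OF assms(1-5) Suc.prems(1,2) Suc.IH Suc.prems(3,4)]) (use Suc.prems in auto)
qed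

theorem lemmaA2:
  fixes alpha lam :: real and k d :: nat
    and V :: "nat \<Rightarrow> 'a set" and H :: "(nat \<Rightarrow> 'a) set"
  assumes "0 < alpha" "alpha < 1" "0 < lam" "lam < 1"
    and "k \<ge> 1"
    and "\<And>i. i < k \<Longrightarrow> finite (V i)"
    and "2 \<le> d" "\<And>i. i < k \<Longrightarrow> d \<le> card (V i)"
    and "H \<subseteq> (\<Pi>\<^sub>E i\<in>{..<k}. V i)"
    and "real (card H) \<le> (alpha * lam) ^ k * (\<Prod>i<k. real (card (V i)))"
  shows "real (card {W \<in> (\<Pi>\<^sub>E i\<in>{..<k}. dsubsets (V i) d).
            real (card (H \<inter> (\<Pi>\<^sub>E i\<in>{..<k}. W i))) > real k * lam * real d ^ k})
         \<le> (real d ^ k - 1) * (2 * alpha powr lam) ^ d * (\<Prod>i<k. real (card (V i) choose d))"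
proof -
  obtain m where "k = Suc m"
    using \<open>k \<ge> 1\<close> by (cases k) auto
  with assms card_dense_boxes_le[of alpha lam d m V H] show ?thesis
    by (simp add: dense_boxes_def)
qed

end
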